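(* For every $C>0$ there is a constant $c>0$ such that for all integers $n\ge1$ and $m$ with $n-|m|$ even and non-negative and $|m|\le C\sqrt n$, and for all integers $k\ge1$, \[ \max_{0\le r\le1}\bigl|(R_n^{|m|})^{(k)}(r)\bigr|\;\ge\;\frac{c}{\sqrt n}\cdot\frac{n^2(n^2-1^2)\cdots(n^2-(k-1)^2)}{2^k\,(1/2)_k}, \] where $R_n^{|m|}(r)=r^{|m|}\,P^{(0,|m|)}_{\frac{n-|m|}{2}}(2r^2-1)$ for $0\le r\le1$. That is, the upper bound $\max_{0\le r\le1}|(R_n^{|m|})^{(k)}(r)|\le \frac{n^2(n^2-1^2)\cdots(n^2-(k-1)^2)}{2^k(1/2)_k}$ is attained within a factor $O(1/\sqrt n)$ when $|m|=O(\sqrt n)$.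
   Context: $P_p^{(\alpha,\beta)}$ denotes the Jacobi polynomial of degree $p$ orthogonal with respect to the weight $(1-x)^\alpha(1+x)^\beta$ on $[-1,1]$, with standard normalization $P_p^{(\alpha,\beta)}(1)=\binom{p+\alpha}{p}$. $f^{(k)}$ denotes the $k$-th derivative; $(\alpha)_k=\alpha(\alpha+1)\cdots(\alpha+k-1)$ is the Pochhammer symbol. *)

theory Defs
  imports "HOL-Analysis.Analysis"
begin

text \<open>Jacobi polynomial P_p^(a,b)(x), standard normalization P_p^(a,b)(1) = binom(p+a, p),
  given by the explicit classical formula.\<close>
definition jacobiP :: "nat \<Rightarrow> real \<Rightarrow> real \<Rightarrow> real \<Rightarrow> real" where
  "jacobiP p a b x =
     (\<Sum>s=0..p. ((real p + a) gchoose (p - s)) * ((real p + b) gchoose s)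
                 * ((x - 1) / 2) ^ s * ((x + 1) / 2) ^ (p - s))"

definition zernikeR :: "nat \<Rightarrow> nat \<Rightarrow> real \<Rightarrow> real" where
  "zernikeR n m r = r ^ m * jacobiP ((n - m) div 2) 0 (real m) (2 * r\<^sup>2 - 1)"

end

theory Submission
  imports Defs "HOL-Computational_Algebra.Polynomial"
begin

text \<open>Write t = r - 1; the k-th derivative at r = 1 is k! times the coefficient of t^k.
  Both R_n^m and the Chebyshev polynomial T_n are combinations sum_s a_s r^(n-2s) (r^2-1)^s,
  with a_s = C(p,s) C(p+m,s) (where n = 2p + m) and a_s = C(n,2s) respectively, and the bound
  of the theorem is exactly T_n^(k)(1), read off from the Chebyshev differential equation.
  The basis polynomials have nonnegative t-coefficients that decrease in s, because
  r^2 = 1 + (r^2 - 1); so by Abel summation it suffices that the prefix sums of the Zernike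
  weights dominate kappa / sqrt n times those of the Chebyshev weights. By the identity
  C(p,s) C(p+m,s) C(n,p) = C(n,2s) C(2s,s) C(n-2s,p-s) and central binomial estimates this
  holds termwise, with factor exp(-16 m^2/n) / (6 sqrt n), for s up to about n/4, and these
  terms already carry at least a sixth of 2^n.\<close>

lemma coeff_mult_nonneg:
  fixes p q :: "'a::linordered_semidom poly"
  assumes "\<And>i. 0 \<le> coeff p i" and "\<And>i. 0 \<le> coeff q i"
  shows "0 \<le> coeff (p * q) k"
  unfolding coeff_mult by (intro sum_nonneg mult_nonneg_nonneg assms)

lemma coeff_power_nonneg:
  fixes p :: "'a::linordered_semidom poly"
  assumes "\<And>i. 0 \<le> coeff p i"
  shows "0 \<le> coeff (p ^ n) k"
proof (induction n arbitrary: k)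
  case 0
  then show ?case by (simp add: coeff_1)
next
  case (Suc n)
  then show ?case by (simp add: coeff_mult_nonneg assms)
qed

lemma deriv_poly: "deriv (poly p) = poly (pderiv p)"
  for p :: "'a::real_normed_field poly"
  by (rule ext, rule DERIV_imp_deriv, rule poly_DERIV)

lemma higher_deriv_poly: "(deriv ^^ k) (poly p) = poly ((pderiv ^^ k) p)"
  for p :: "'a::real_normed_field poly"
  by (induction k) (auto simp: deriv_poly)

lemma higher_pderiv_pcompose_shift:
  "(pderiv ^^ k) (pcompose p [:a, 1:]) = pcompose ((pderiv ^^ k) p) [:a, 1:]"
  by (induction k) (auto simp: pderiv_pcompose pderiv_pCons)

lemma higher_deriv_poly_pcompose_shift:
  fixes p :: "'a::real_normed_field poly"
  shows "(deriv ^^ k) (poly (pcompose p [:- a, 1:])) a = fact k * coeff p k"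
  by (simp add: higher_deriv_poly higher_pderiv_pcompose_shift poly_pcompose poly_0_coeff_0
      coeff_higher_pderiv pochhammer_fact)

lemma abs_higher_deriv_poly_le_SUP:
  fixes p :: "real poly"
  assumes "x \<in> {a..b}"
  shows "\<bar>(deriv ^^ k) (poly p) x\<bar> \<le> (SUP y\<in>{a..b}. \<bar>(deriv ^^ k) (poly p) y\<bar>)"
proof (rule cSUP_upper[OF assms])
  have "continuous_on {a..b} (\<lambda>y. \<bar>(deriv ^^ k) (poly p) y\<bar>)"
    unfolding higher_deriv_poly by (intro continuous_intros)
  then show "bdd_above ((\<lambda>y. \<bar>(deriv ^^ k) (poly p) y\<bar>) ` {a..b})"
    by (intro bounded_imp_bdd_above compact_imp_bounded compact_continuous_image compact_Icc)
qed

lemma sum_mult_antimono_nonneg: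
  fixes x b :: "nat \<Rightarrow> 'a::linordered_idom"
  assumes "\<And>S. S \<le> N \<Longrightarrow> 0 \<le> (\<Sum>s\<le>S. x s)"
    and "\<And>s. s < N \<Longrightarrow> b (Suc s) \<le> b s" and "0 \<le> b N"
  shows "0 \<le> (\<Sum>s\<le>N. x s * b s)"
proof -
  have Abel: "(\<Sum>s\<le>N. x s * b s)
      = (\<Sum>S<N. (\<Sum>s\<le>S. x s) * (b S - b (Suc S))) + (\<Sum>s\<le>N. x s) * b N"
    by (induction N) (simp_all add: algebra_simps)
  have "0 \<le> (\<Sum>S<N. (\<Sum>s\<le>S. x s) * (b S - b (Suc S)))"
    by (rule sum_nonneg, rule mult_nonneg_nonneg) (use assms in auto)
  then show ?thesis
    unfolding Abel using assms by simp
qed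

section \<open>Radial expansions\<close>

text \<open>Polynomials in the variable t = r - 1: r_poly is r and r2m1_poly is r^2 - 1.\<close>

definition r_poly :: "real poly" where "r_poly = [:1, 1:]"
definition r2m1_poly :: "real poly" where "r2m1_poly = [:0, 2, 1:]"

lemma poly_r_poly [simp]: "poly r_poly t = 1 + t"
  by (simp add: r_poly_def)

lemma poly_r2m1_poly [simp]: "poly r2m1_poly t = (1 + t)\<^sup>2 - 1"
  by (simp add: r2m1_poly_def power2_eq_square algebra_simps)

lemma pderiv_r_poly: "pderiv r_poly = 1"
  by (simp add: r_poly_def pderiv_pCons)

lemma pderiv_r2m1_poly: "pderiv r2m1_poly = 2 * r_poly"
  by (simp add: r2m1_poly_def r_poly_def pderiv_pCons poly_eq_iff coeff_pCons numeral_poly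
      split: nat.split)

lemma r_poly_square: "r_poly ^ 2 = 1 + r2m1_poly"
  by (simp add: r_poly_def r2m1_poly_def power2_eq_square poly_eq_iff coeff_pCons numeral_poly
      split: nat.split)

lemma coeff_r_poly_mult:
  "coeff (r_poly * p) 0 = coeff p 0"
  "coeff (r_poly * p) (Suc k) = coeff p (Suc k) + coeff p k"
  by (simp_all add: r_poly_def mult_pCons_left coeff_pCons)

lemma coeff_r2m1_poly_mult:
  "coeff (r2m1_poly * p) 0 = 0"
  "coeff (r2m1_poly * p) (Suc 0) = 2 * coeff p 0"
  "coeff (r2m1_poly * p) (Suc (Suc k)) = 2 * coeff p (Suc k) + coeff p k"
  by (simp_all add: r2m1_poly_def mult_pCons_left coeff_pCons)

lemma coeff_radial_basis_nonneg: "0 \<le> coeff (r2m1_poly ^ s * r_poly ^ j) k"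
  by (intro coeff_mult_nonneg coeff_power_nonneg)
    (auto simp: r_poly_def r2m1_poly_def coeff_pCons split: nat.split)

lemma coeff_radial_basis_antimono:
  assumes "2 * s + 2 \<le> n"
  shows "coeff (r2m1_poly ^ Suc s * r_poly ^ (n - 2 * Suc s)) k
           \<le> coeff (r2m1_poly ^ s * r_poly ^ (n - 2 * s)) k"
proof -
  have "n - 2 * s = (n - 2 * Suc s) + 2"
    using assms by simp
  then have "r2m1_poly ^ s * r_poly ^ (n - 2 * s) = r2m1_poly ^ s * r_poly ^ (n - 2 * Suc s) * r_poly ^ 2"
    by (simp only: power_add mult.assoc)
  also have "\<dots> = r2m1_poly ^ s * r_poly ^ (n - 2 * Suc s) + r2m1_poly ^ Suc s * r_poly ^ (n - 2 * Suc s)"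
    by (simp add: r_poly_square algebra_simps)
  finally show ?thesis
    using coeff_radial_basis_nonneg[of s "n - 2 * Suc s" k] by simp
qed

definition radial_expansion :: "nat \<Rightarrow> (nat \<Rightarrow> real) \<Rightarrow> real poly" where
  "radial_expansion n a = (\<Sum>s\<le>n div 2. smult (a s) (r2m1_poly ^ s * r_poly ^ (n - 2 * s)))"

lemma coeff_radial_expansion_scale:
  "coeff (radial_expansion n (\<lambda>s. c * a s)) k = c * coeff (radial_expansion n a) k"
  by (simp add: radial_expansion_def coeff_sum sum_distrib_left mult.assoc)

lemma coeff_radial_expansion_le:
  assumes "\<And>S. S \<le> n div 2 \<Longrightarrow> (\<Sum>s\<le>S. a s) \<le> (\<Sum>s\<le>S. b s)"
  shows "coeff (radial_expansion n a) k \<le> coeff (radial_expansion n b) k"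
proof -
  define \<beta> where "\<beta> s = coeff (r2m1_poly ^ s * r_poly ^ (n - 2 * s)) k" for s
  have "0 \<le> (\<Sum>s\<le>n div 2. (b s - a s) * \<beta> s)"
  proof (rule sum_mult_antimono_nonneg)
    show "0 \<le> (\<Sum>s\<le>S. b s - a s)" if "S \<le> n div 2" for S
      using assms[OF that] by (simp add: sum_subtractf)
    show "\<beta> (Suc s) \<le> \<beta> s" if "s < n div 2" for s
      unfolding \<beta>_def using that by (intro coeff_radial_basis_antimono) linarith
  qed (simp add: \<beta>_def coeff_radial_basis_nonneg)
  then show ?thesis
    by (simp add: radial_expansion_def coeff_sum \<beta>_def left_diff_distrib sum_subtractf)
qed

section \<open>Chebyshev and Zernike polynomials\<close>

text \<open>The Chebyshev polynomials (T_n(r), U_(n-1)(r)) in the variable t = r - 1; the recursion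
  comes from (r + sqrt(r^2 - 1))^n = T_n(r) + sqrt(r^2 - 1) U_(n-1)(r).\<close>

fun chebyshev_pair :: "nat \<Rightarrow> real poly \<times> real poly" where
  "chebyshev_pair 0 = (1, 0)"
| "chebyshev_pair (Suc n) =
     (r_poly * fst (chebyshev_pair n) + r2m1_poly * snd (chebyshev_pair n),
      fst (chebyshev_pair n) + r_poly * snd (chebyshev_pair n))"

abbreviation chebyshev_T :: "nat \<Rightarrow> real poly" where
  "chebyshev_T n \<equiv> fst (chebyshev_pair n)"

abbreviation chebyshev_U :: "nat \<Rightarrow> real poly" where
  "chebyshev_U n \<equiv> snd (chebyshev_pair n)"

lemma pderiv_chebyshev_pair:
  "pderiv (chebyshev_T n) = of_nat n * chebyshev_U n \<and>
   r2m1_poly * pderiv (chebyshev_U n) = of_nat n * chebyshev_T n - r_poly * chebyshev_U n"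
proof (induction n)
  case 0
  then show ?case by simp
next
  case (Suc n)
  define T U where "T = chebyshev_T n" and "U = chebyshev_U n"
  have dT: "pderiv T = of_nat n * U" and dU: "r2m1_poly * pderiv U = of_nat n * T - r_poly * U"
    using Suc by (simp_all add: T_def U_def)
  have "pderiv (r_poly * T + r2m1_poly * U) = r_poly * pderiv T + T + r2m1_poly * pderiv U + 2 * r_poly * U"
    by (simp add: pderiv_add pderiv_mult pderiv_r_poly pderiv_r2m1_poly algebra_simps)
  also have "\<dots> = of_nat (Suc n) * (T + r_poly * U)"
    by (simp only: dT dU) (simp add: algebra_simps of_nat_Suc)
  finally have dT': "pderiv (r_poly * T + r2m1_poly * U) = of_nat (Suc n) * (T + r_poly * U)" .
  have "r2m1_poly * pderiv (T + r_poly * U)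
      = r2m1_poly * pderiv T + r2m1_poly * U + r_poly * (r2m1_poly * pderiv U)"
    by (simp add: pderiv_add pderiv_mult pderiv_r_poly algebra_simps)
  also have "\<dots> = of_nat (Suc n) * (r_poly * T + r2m1_poly * U) - r_poly * (T + r_poly * U)"
    by (simp add: dT dU algebra_simps of_nat_Suc)
  finally show ?case
    using dT' by (simp add: T_def U_def)
qed

lemma chebyshev_T_ode:
  "r2m1_poly * pderiv (pderiv (chebyshev_T n)) + r_poly * pderiv (chebyshev_T n)
     = smult ((real n)\<^sup>2) (chebyshev_T n)"
proof -
  have dT: "pderiv (chebyshev_T n) = of_nat n * chebyshev_U n"
    and dU: "r2m1_poly * pderiv (chebyshev_U n) = of_nat n * chebyshev_T n - r_poly * chebyshev_U n"
    using pderiv_chebyshev_pair[of n] by simp_all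
  have "r2m1_poly * pderiv (pderiv (chebyshev_T n)) = of_nat n * (r2m1_poly * pderiv (chebyshev_U n))"
    by (simp add: dT pderiv_mult mult_ac)
  also have "\<dots> = of_nat n ^ 2 * chebyshev_T n - r_poly * pderiv (chebyshev_T n)"
    by (simp add: dU dT algebra_simps power2_eq_square)
  finally have "r2m1_poly * pderiv (pderiv (chebyshev_T n)) + r_poly * pderiv (chebyshev_T n)
      = of_nat n ^ 2 * chebyshev_T n"
    by simp
  then show ?thesis
    by (simp add: of_nat_poly power2_eq_square)
qed

lemma coeff_chebyshev_T_Suc:
  "real (Suc k) * (2 * real k + 1) * coeff (chebyshev_T n) (Suc k)
     = ((real n)\<^sup>2 - (real k)\<^sup>2) * coeff (chebyshev_T n) k"
proof -
  have ode: "coeff (r2m1_poly * pderiv (pderiv (chebyshev_T n))) k + coeff (r_poly * pderiv (chebyshev_T n)) k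
      = (real n)\<^sup>2 * coeff (chebyshev_T n) k"
    using arg_cong[OF chebyshev_T_ode, of "\<lambda>p. coeff p k"] by simp
  consider "k = 0" | "k = 1" | j where "k = Suc (Suc j)"
    by (metis One_nat_def not0_implies_Suc)
  then show ?thesis
    using ode by cases
      (simp_all add: coeff_pderiv coeff_r_poly_mult coeff_r2m1_poly_mult algebra_simps power2_eq_square)
qed

lemma coeff_chebyshev_T:
  "fact k * coeff (chebyshev_T n) k = (\<Prod>j<k. (real n)\<^sup>2 - (real j)\<^sup>2) / (2 ^ k * pochhammer (1/2) k)"
proof -
  have "fact k * (2 ^ k * pochhammer (1/2) k) * coeff (chebyshev_T n) k = (\<Prod>j<k. (real n)\<^sup>2 - (real j)\<^sup>2)"
  proof (induction k)
    case 0
    then show ?case by (induction n) (simp_all add: coeff_r_poly_mult coeff_r2m1_poly_mult)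
  next
    case (Suc k)
    have "fact (Suc k) * (2 ^ Suc k * pochhammer (1/2) (Suc k)) * coeff (chebyshev_T n) (Suc k)
        = fact k * (2 ^ k * pochhammer (1/2) k) * (real (Suc k) * (2 * real k + 1) * coeff (chebyshev_T n) (Suc k))"
      by (simp add: pochhammer_rec' algebra_simps)
    also have "\<dots> = fact k * (2 ^ k * pochhammer (1/2) k) * (((real n)\<^sup>2 - (real k)\<^sup>2) * coeff (chebyshev_T n) k)"
      by (simp only: coeff_chebyshev_T_Suc)
    also have "\<dots> = ((real n)\<^sup>2 - (real k)\<^sup>2) * (fact k * (2 ^ k * pochhammer (1/2) k) * coeff (chebyshev_T n) k)"
      by (simp only: mult_ac)
    also have "\<dots> = (\<Prod>j<Suc k. (real n)\<^sup>2 - (real j)\<^sup>2)"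
      using Suc by (simp add: lessThan_Suc mult_ac)
    finally show ?case .
  qed
  moreover have "0 < pochhammer (1/2::real) k"
    by (rule pochhammer_pos) simp
  ultimately show ?thesis
    by (simp add: field_simps)
qed

lemma r_poly_mult_binomial_term:
  "r_poly * smult (of_nat (n choose j)) (p * r_poly ^ (n - j))
     = smult (of_nat (n choose j)) (p * r_poly ^ (Suc n - j))"
proof (cases "j \<le> n")
  case True
  then have "Suc n - j = Suc (n - j)" by simp
  then show ?thesis by (simp add: algebra_simps)
qed (simp add: binomial_eq_0)

lemma chebyshev_pair_binomial:
  "chebyshev_T n = (\<Sum>s\<le>n. smult (of_nat (n choose (2 * s))) (r2m1_poly ^ s * r_poly ^ (n - 2 * s))) \<and>
   chebyshev_U n = (\<Sum>s\<le>n. smult (of_nat (n choose (2 * s + 1))) (r2m1_poly ^ s * r_poly ^ (n - (2 * s + 1))))"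
proof (induction n)
  case 0
  then show ?case by simp
next
  case (Suc n)
  have T: "chebyshev_T n = (\<Sum>s\<le>n. smult (of_nat (n choose (2 * s))) (r2m1_poly ^ s * r_poly ^ (n - 2 * s)))"
    and U: "chebyshev_U n = (\<Sum>s\<le>n. smult (of_nat (n choose (2 * s + 1))) (r2m1_poly ^ s * r_poly ^ (n - (2 * s + 1))))"
    using Suc by simp_all
  have rT: "r_poly * chebyshev_T n
      = (\<Sum>s\<le>Suc n. smult (of_nat (n choose (2 * s))) (r2m1_poly ^ s * r_poly ^ (Suc n - 2 * s)))"
    unfolding T sum_distrib_left r_poly_mult_binomial_term by (simp add: binomial_eq_0)
  have uU: "r2m1_poly * chebyshev_U n
      = (\<Sum>s\<le>n. smult (of_nat (n choose Suc (2 * s))) (r2m1_poly ^ Suc s * r_poly ^ (Suc n - 2 * Suc s)))"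
    unfolding U sum_distrib_left by (simp add: mult.assoc)
  have "chebyshev_T (Suc n) = r_poly * chebyshev_T n + r2m1_poly * chebyshev_U n"
    by simp
  also have "\<dots> = (\<Sum>s\<le>Suc n. smult (of_nat (Suc n choose (2 * s))) (r2m1_poly ^ s * r_poly ^ (Suc n - 2 * s)))"
    unfolding rT uU sum.atMost_Suc_shift[of _ "Suc n"] sum.atMost_Suc_shift[of _ n]
    by (simp add: sum.distrib smult_add_left add.commute)
  finally have TS: "chebyshev_T (Suc n) = \<dots>" .
  have rU: "r_poly * chebyshev_U n
      = (\<Sum>s\<le>n. smult (of_nat (n choose (2 * s + 1))) (r2m1_poly ^ s * r_poly ^ (Suc n - (2 * s + 1))))"
    unfolding U sum_distrib_left by (simp only: r_poly_mult_binomial_term)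
  have "chebyshev_U (Suc n) = chebyshev_T n + r_poly * chebyshev_U n"
    by simp
  also have "\<dots> = (\<Sum>s\<le>n. smult (of_nat (Suc n choose (2 * s + 1))) (r2m1_poly ^ s * r_poly ^ (Suc n - (2 * s + 1))))"
    unfolding T rU by (simp add: sum.distrib smult_add_left)
  also have "\<dots> = (\<Sum>s\<le>Suc n. smult (of_nat (Suc n choose (2 * s + 1))) (r2m1_poly ^ s * r_poly ^ (Suc n - (2 * s + 1))))"
    by (simp add: binomial_eq_0)
  finally show ?case
    using TS by simp
qed

lemma chebyshev_T_eq_radial_expansion:
  "chebyshev_T n = radial_expansion n (\<lambda>s. real (n choose (2 * s)))"
  unfolding radial_expansion_def chebyshev_pair_binomial[THEN conjunct1]
  by (rule sum.mono_neutral_right) (auto simp: binomial_eq_0)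

lemma zernikeR_eq_radial_expansion:
  "zernikeR (2 * p + m) m
     = poly (pcompose (radial_expansion (2 * p + m) (\<lambda>s. real (p choose s) * real ((p + m) choose s))) [:-1, 1:])"
proof
  fix r :: real
  define n where "n = 2 * p + m"
  have "zernikeR n m r = r ^ m * (\<Sum>s=0..p. ((real p + 0) gchoose (p - s)) * ((real p + real m) gchoose s)
                 * ((2 * r\<^sup>2 - 1 - 1) / 2) ^ s * ((2 * r\<^sup>2 - 1 + 1) / 2) ^ (p - s))"
    unfolding zernikeR_def jacobiP_def by (simp add: n_def)
  also have "\<dots> = (\<Sum>s\<le>p. real (p choose s) * real ((p + m) choose s) * ((r\<^sup>2 - 1) ^ s * r ^ (n - 2 * s)))"
    unfolding sum_distrib_left atLeast0AtMost
  proof (rule sum.cong[OF refl])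
    fix s assume s: "s \<in> {..p}"
    have g1: "(real p + 0) gchoose (p - s) = real (p choose s)"
      using s by (simp add: binomial_gbinomial[symmetric] binomial_symmetric[symmetric])
    have g2: "(real p + real m) gchoose s = real ((p + m) choose s)"
      by (metis binomial_gbinomial of_nat_add)
    have e: "n - 2 * s = m + 2 * (p - s)"
      using s by (auto simp: n_def)
    have h1: "(2 * r\<^sup>2 - 1 - 1) / 2 = r\<^sup>2 - 1" and h2: "(2 * r\<^sup>2 - 1 + 1) / 2 = r\<^sup>2"
      by simp_all
    show "r ^ m * (((real p + 0) gchoose (p - s)) * ((real p + real m) gchoose s)
          * ((2 * r\<^sup>2 - 1 - 1) / 2) ^ s * ((2 * r\<^sup>2 - 1 + 1) / 2) ^ (p - s))
        = real (p choose s) * real ((p + m) choose s) * ((r\<^sup>2 - 1) ^ s * r ^ (n - 2 * s))"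
      unfolding g1 g2 e h1 h2 by (simp add: power_add mult_ac flip: power_mult)
  qed
  also have "\<dots> = poly (radial_expansion n (\<lambda>s. real (p choose s) * real ((p + m) choose s))) (r - 1)"
    unfolding radial_expansion_def poly_sum
    by (rule sum.mono_neutral_cong_left) (auto simp: n_def binomial_eq_0)
  finally show "zernikeR (2 * p + m) m r = poly (pcompose (radial_expansion (2 * p + m)
      (\<lambda>s. real (p choose s) * real ((p + m) choose s))) [:-1, 1:]) r"
    by (simp add: poly_pcompose n_def)
qed

lemma zernikeR_higher_deriv_SUP_ge:
  assumes n: "n = 2 * p + m"
    and weights: "\<And>S. S \<le> n div 2 \<Longrightarrow>
      c * (\<Sum>s\<le>S. real (n choose (2 * s))) \<le> (\<Sum>s\<le>S. real (p choose s) * real ((p + m) choose s))"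
  shows "c * ((\<Prod>j<k. (real n)\<^sup>2 - (real j)\<^sup>2) / (2 ^ k * pochhammer (1/2) k))
           \<le> (SUP r\<in>{0..1::real}. \<bar>(deriv ^^ k) (zernikeR n m) r\<bar>)"
proof -
  let ?Z = "radial_expansion n (\<lambda>s. real (p choose s) * real ((p + m) choose s))"
  have Z: "zernikeR n m = poly (pcompose ?Z [:-1, 1:])"
    unfolding n by (rule zernikeR_eq_radial_expansion)
  have "c * ((\<Prod>j<k. (real n)\<^sup>2 - (real j)\<^sup>2) / (2 ^ k * pochhammer (1/2) k))
      = fact k * coeff (radial_expansion n (\<lambda>s. c * real (n choose (2 * s)))) k"
    unfolding coeff_chebyshev_T[symmetric] chebyshev_T_eq_radial_expansion coeff_radial_expansion_scale
    by (simp only: mult_ac)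
  also have "\<dots> \<le> fact k * coeff ?Z k"
    using weights by (intro mult_left_mono coeff_radial_expansion_le) (auto simp: sum_distrib_left)
  also have "\<dots> = (deriv ^^ k) (zernikeR n m) 1"
    unfolding Z by (rule higher_deriv_poly_pcompose_shift[symmetric])
  also have "\<dots> \<le> (SUP r\<in>{0..1::real}. \<bar>(deriv ^^ k) (zernikeR n m) r\<bar>)"
    unfolding Z by (rule order_trans[OF abs_ge_self abs_higher_deriv_poly_le_SUP]) simp
  finally show ?thesis .
qed

section \<open>Binomial estimates\<close>

lemma central_binomial_Suc:
  "real (Suc s) * real ((2 * Suc s) choose Suc s) = 2 * (2 * real s + 1) * real ((2 * s) choose s)"
proof -
  have "Suc s * ((2 * Suc s) choose Suc s) = 2 * (Suc s * (Suc (2 * s) choose Suc s))"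
    using binomial_symmetric[of s "Suc (2 * s)"] by simp
  also have "Suc s * (Suc (2 * s) choose Suc s) = Suc (2 * s) * ((2 * s) choose s)"
    by (rule Suc_times_binomial)
  finally have "Suc s * ((2 * Suc s) choose Suc s) = 2 * (Suc (2 * s) * ((2 * s) choose s))" .
  then have "real (Suc s * ((2 * Suc s) choose Suc s)) = real (2 * (Suc (2 * s) * ((2 * s) choose s)))"
    by (simp only:)
  then show ?thesis
    by (simp only: of_nat_mult) (simp add: algebra_simps del: binomial_Suc_Suc)
qed

lemma central_binomial_sq_lower: "16 ^ s \<le> real ((2 * s) choose s) ^ 2 * (4 * real s + 1)"
proof (induction s)
  case 0
  then show ?case by simp
next
  case (Suc s)
  define a where "a = real ((2 * s) choose s)"
  define b where "b = real ((2 * Suc s) choose Suc s)"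
  have rb: "real (Suc s) * b = 2 * (2 * real s + 1) * a"
    using central_binomial_Suc[of s] by (simp add: a_def b_def)
  have IH: "16 ^ s \<le> a ^ 2 * (4 * real s + 1)" using Suc by (simp add: a_def)
  have "16 * 16 ^ s * (real (Suc s))\<^sup>2 \<le> 16 * (a ^ 2 * (4 * real s + 1)) * (real (Suc s))\<^sup>2"
    using IH by (intro mult_right_mono) auto
  also have "\<dots> \<le> 4 * (2 * real s + 1)\<^sup>2 * a\<^sup>2 * (4 * real (Suc s) + 1)"
  proof -
    have "16 * (4 * real s + 1) * (real (Suc s))\<^sup>2 \<le> 4 * (2 * real s + 1)\<^sup>2 * (4 * real (Suc s) + 1)"
      by (simp add: power2_eq_square algebra_simps)
    from mult_right_mono[OF this, of "a^2"] show ?thesis by (simp add: algebra_simps)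
  qed
  also have "\<dots> = (real (Suc s) * b)\<^sup>2 * (4 * real (Suc s) + 1)"
    unfolding rb by (simp add: power2_eq_square algebra_simps)
  also have "\<dots> = b\<^sup>2 * (4 * real (Suc s) + 1) * (real (Suc s))\<^sup>2"
    by (simp only: power_mult_distrib mult_ac)
  finally have "16 ^ Suc s * (real (Suc s))\<^sup>2 \<le> b\<^sup>2 * (4 * real (Suc s) + 1) * (real (Suc s))\<^sup>2"
    by simp
  then have "16 ^ Suc s \<le> b\<^sup>2 * (4 * real (Suc s) + 1)"
    by (rule mult_right_le_imp_le) simp
  then show ?case by (simp add: b_def)
qed

lemma central_binomial_sq_upper: "real ((2 * s) choose s) ^ 2 * (3 * real s + 1) \<le> 16 ^ s"
proof (induction s)
  case 0
  then show ?case by simp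
next
  case (Suc s)
  define a where "a = real ((2 * s) choose s)"
  define b where "b = real ((2 * Suc s) choose Suc s)"
  have rb: "real (Suc s) * b = 2 * (2 * real s + 1) * a"
    using central_binomial_Suc[of s] by (simp add: a_def b_def)
  have IH: "a ^ 2 * (3 * real s + 1) \<le> 16 ^ s" using Suc by (simp add: a_def)
  have "b\<^sup>2 * (3 * real (Suc s) + 1) * (real (Suc s))\<^sup>2 = (real (Suc s) * b)\<^sup>2 * (3 * real (Suc s) + 1)"
    by (simp only: power_mult_distrib mult_ac)
  also have "(real (Suc s) * b)\<^sup>2 * (3 * real (Suc s) + 1) = 4 * (2 * real s + 1)\<^sup>2 * a\<^sup>2 * (3 * real (Suc s) + 1)"
    unfolding rb by (simp add: power2_eq_square algebra_simps)
  also have "\<dots> \<le> 16 * (a ^ 2 * (3 * real s + 1)) * (real (Suc s))\<^sup>2"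
  proof -
    have "4 * (2 * real s + 1)\<^sup>2 * (3 * real (Suc s) + 1) \<le> 16 * (3 * real s + 1) * (real (Suc s))\<^sup>2"
      by (simp add: power2_eq_square algebra_simps)
    from mult_right_mono[OF this, of "a^2"] show ?thesis by (simp add: algebra_simps)
  qed
  also have "\<dots> \<le> 16 * 16 ^ s * (real (Suc s))\<^sup>2"
    using IH by (intro mult_right_mono) auto
  finally have "b\<^sup>2 * (3 * real (Suc s) + 1) * (real (Suc s))\<^sup>2 \<le> 16 ^ Suc s * (real (Suc s))\<^sup>2"
    by simp
  then have "b\<^sup>2 * (3 * real (Suc s) + 1) \<le> 16 ^ Suc s"
    by (rule mult_right_le_imp_le) simp
  then show ?case by (simp add: b_def)
qed

lemma binomial_sq_upper:
  assumes "1 \<le> n"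
  shows "real (n choose k) ^ 2 * real n \<le> 4 ^ n"
proof -
  have m: "real (n choose k) \<le> real (n choose (n div 2))"
    by (simp add: binomial_maximum)
  have "real (n choose (n div 2)) ^ 2 * real n \<le> 4 ^ n"
  proof (cases "even n")
    case True
    then obtain a where a: "n = 2 * a" by (auto elim: evenE)
    have "real ((2 * a) choose a) ^ 2 * real n \<le> real ((2 * a) choose a) ^ 2 * (3 * real a + 1)"
      using a by (intro mult_left_mono) auto
    also have "\<dots> \<le> 16 ^ a" by (rule central_binomial_sq_upper)
    finally show ?thesis using a by (simp add: power_mult)
  next
    case False
    then obtain a where a: "n = 2 * a + 1" by (auto elim: oddE)
    have nd: "n div 2 = a" using a by simp
    have e: "(2 * Suc a) choose Suc a = 2 * (n choose a)"
      using a binomial_symmetric[of a "Suc (2 * a)"] by simp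
    have "real (n choose a) ^ 2 * real n \<le> real (n choose a) ^ 2 * (3 * real (Suc a) + 1)"
      using a by (intro mult_left_mono) auto
    also have "\<dots> = real ((2 * Suc a) choose Suc a) ^ 2 * (3 * real (Suc a) + 1) / 4"
      unfolding e by (simp add: power2_eq_square)
    also have "\<dots> \<le> 16 ^ Suc a / 4"
      using central_binomial_sq_upper[of "Suc a"] by (simp add: divide_right_mono)
    also have "\<dots> = 4 ^ n" using a by (simp add: power_mult power_add)
    finally show ?thesis using nd by simp
  qed
  moreover have "real (n choose k) ^ 2 * real n \<le> real (n choose (n div 2)) ^ 2 * real n"
    using m by (intro mult_right_mono power_mono) auto
  ultimately show ?thesis by linarith
qed

lemma binomial_middle_sq_lower: "4 ^ N \<le> real (N choose (N div 2)) ^ 2 * (4 * (2 * real N + 1))"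
proof (cases "even N")
  case True
  then obtain a where a: "N = 2 * a" by (auto elim: evenE)
  have "4 ^ N = (16::real) ^ a" using a by (simp add: power_mult)
  also have "\<dots> \<le> real ((2 * a) choose a) ^ 2 * (4 * real a + 1)"
    by (rule central_binomial_sq_lower)
  also have "\<dots> \<le> real ((2 * a) choose a) ^ 2 * (4 * (2 * real N + 1))"
    using a by (intro mult_left_mono) auto
  finally show ?thesis using a by simp
next
  case False
  then obtain a where a: "N = 2 * a + 1" by (auto elim: oddE)
  have nd: "N div 2 = a" using a by simp
  have ge: "(2 * a) choose a \<le> N choose a"
    using a by (cases a) auto
  have "4 ^ N = 4 * (16::real) ^ a" using a by (simp add: power_mult power_add)
  also have "\<dots> \<le> 4 * (real ((2 * a) choose a) ^ 2 * (4 * real a + 1))"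
    using central_binomial_sq_lower[of a] by simp
  also have "\<dots> \<le> real (N choose a) ^ 2 * (4 * (2 * real N + 1))"
  proof -
    have "real ((2 * a) choose a) ^ 2 \<le> real (N choose a) ^ 2"
      using ge by (intro power_mono) auto
    moreover have "4 * real a + 1 \<le> 2 * real N + 1" using a by simp
    ultimately have "real ((2 * a) choose a) ^ 2 * (4 * real a + 1) \<le> real (N choose a) ^ 2 * (2 * real N + 1)"
      by (intro mult_mono) auto
    then show ?thesis by (simp add: algebra_simps)
  qed
  finally show ?thesis using nd by simp
qed

lemma binomial_le_central_product:
  assumes "n = 2 * s + N" and "1 \<le> n"
  shows "real (n choose k) \<le> 6 * sqrt (real n) * (real ((2 * s) choose s) * real (N choose (N div 2)))"
proof -
  define P where "P = real ((2 * s) choose s) * real (N choose (N div 2))"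
  have "real (n choose k) ^ 2 * real n \<le> 4 ^ n"
    using assms(2) by (rule binomial_sq_upper)
  also have "(4::real) ^ n = 16 ^ s * 4 ^ N"
    using assms(1) by (simp add: power_add power_mult)
  also have "\<dots> \<le> (real ((2 * s) choose s) ^ 2 * (4 * real s + 1))
                  * (real (N choose (N div 2)) ^ 2 * (4 * (2 * real N + 1)))"
    by (intro mult_mono central_binomial_sq_lower binomial_middle_sq_lower) auto
  also have "\<dots> = P\<^sup>2 * ((4 * real s + 1) * (4 * (2 * real N + 1)))"
    by (simp add: P_def power_mult_distrib mult_ac)
  also have "\<dots> \<le> P\<^sup>2 * ((3 * real n) * (12 * real n))"
  proof -
    have "(4 * real s + 1) * (4 * (2 * real N + 1)) \<le> (3 * real n) * (12 * real n)"
      by (rule mult_mono) (use assms in auto)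
    then show ?thesis
      by (rule mult_left_mono) simp
  qed
  also have "\<dots> = (6 * sqrt (real n) * P)\<^sup>2 * real n"
    by (simp add: power_mult_distrib power2_eq_square)
  finally have "real (n choose k) ^ 2 \<le> (6 * sqrt (real n) * P)\<^sup>2"
    using assms(2) by simp
  then show ?thesis
    unfolding P_def by (rule power2_le_imp_le) simp
qed

lemma binomial_add_mult_power_le:
  fixes N q d :: nat
  assumes "q + d \<le> N"
  shows "real (N choose (q + d)) * real (Suc q) ^ d \<le> real (N choose q) * real (N - q) ^ d"
  using assms
proof (induction d)
  case 0
  then show ?case by simp
next
  case (Suc d)
  have IH: "real (N choose (q + d)) * real (Suc q) ^ d \<le> real (N choose q) * real (N - q) ^ d"
    using Suc by simp
  have st: "real (Suc (q + d)) * real (N choose Suc (q + d)) = real (N - (q + d)) * real (N choose (q + d))"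
    using binomial_absorb_comp[of N "q + d"] binomial_absorption[of "q + d" N] by (metis of_nat_mult)
  have "real (N choose (q + Suc d)) * real (Suc q) ^ Suc d
      = real (N choose Suc (q + d)) * real (Suc q) * real (Suc q) ^ d" by (simp add: algebra_simps)
  also have "\<dots> \<le> real (N choose Suc (q + d)) * real (Suc (q + d)) * real (Suc q) ^ d"
    by (intro mult_right_mono mult_left_mono) auto
  also have "\<dots> = real (N - (q + d)) * (real (N choose (q + d)) * real (Suc q) ^ d)"
    using st by (simp add: algebra_simps)
  also have "\<dots> \<le> real (N - q) * (real (N choose q) * real (N - q) ^ d)"
    by (rule mult_mono) (use IH Suc.prems in auto)
  also have "\<dots> = real (N choose q) * real (N - q) ^ Suc d" by simp
  finally show ?case .
qed

lemma exp_le_power_one_minus: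
  fixes y :: real and m d :: nat
  assumes "0 \<le> y" "y \<le> 1/2" "d \<le> m"
  shows "exp (- 2 * y * real m) \<le> (1 - y) ^ d"
proof -
  have l: "- y - 2 * y\<^sup>2 \<le> ln (1 - y)"
    using ln_one_minus_pos_lower_bound assms by auto
  have "y * (2 * y) \<le> y * 1" using assms by (intro mult_left_mono) auto
  then have "- 2 * y \<le> - y - 2 * y\<^sup>2" by (simp add: power2_eq_square)
  then have l2: "- 2 * y \<le> ln (1 - y)" using l by linarith
  have "exp (- 2 * y * real m) \<le> exp (real m * ln (1 - y))"
    using mult_left_mono[OF l2, of "real m"] by (simp add: mult_ac)
  also have "\<dots> = (1 - y) ^ m" using assms by (simp add: exp_of_nat_mult)
  also have "\<dots> \<le> (1 - y) ^ d" using assms by (intro power_decreasing) auto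
  finally show ?thesis .
qed

lemma binomial_off_centre_lower:
  assumes "m \<le> q"
  shows "exp (- 2 * (real m)\<^sup>2 / (real q + real m)) * real ((2 * q + m) choose (q + m div 2))
           \<le> real ((2 * q + m) choose q)"
proof (cases "m = 0")
  case True
  then show ?thesis by simp
next
  case False
  define y where "y = real m / (real q + real m)"
  define d where "d = m div 2"
  define B where "B = real ((2 * q + m) choose (q + d))"
  have qm: "0 < real q + real m"
    using False by simp
  have y: "0 \<le> y" "y \<le> 1/2"
    using assms qm by (auto simp: y_def field_simps)
  have "exp (- 2 * (real m)\<^sup>2 / (real q + real m)) = exp (- 2 * y * real m)"
    by (simp add: y_def power2_eq_square)
  also have "\<dots> \<le> (1 - y) ^ d"
    using y by (intro exp_le_power_one_minus) (auto simp: d_def)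
  finally have E: "exp (- 2 * (real m)\<^sup>2 / (real q + real m)) \<le> (1 - y) ^ d" .
  have "(1 - y) * (real q + real m) = real q"
    using qm by (simp add: y_def field_simps)
  then have R: "(1 - y) ^ d * (real q + real m) ^ d \<le> real (Suc q) ^ d"
    unfolding power_mult_distrib[symmetric] using y by (intro power_mono) auto
  have S: "B * real (Suc q) ^ d \<le> real ((2 * q + m) choose q) * (real q + real m) ^ d"
    using binomial_add_mult_power_le[of q d "2 * q + m"] by (simp add: B_def d_def)
  have "exp (- 2 * (real m)\<^sup>2 / (real q + real m)) * B * (real q + real m) ^ d
      \<le> (1 - y) ^ d * B * (real q + real m) ^ d"
    using E by (intro mult_right_mono) (auto simp: B_def)
  also have "\<dots> = B * ((1 - y) ^ d * (real q + real m) ^ d)"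
    by (simp only: mult_ac)
  also have "\<dots> \<le> B * real (Suc q) ^ d"
    using R by (rule mult_left_mono) (simp add: B_def)
  also have "\<dots> \<le> real ((2 * q + m) choose q) * (real q + real m) ^ d"
    by (rule S)
  finally have "exp (- 2 * (real m)\<^sup>2 / (real q + real m)) * B * (real q + real m) ^ d
      \<le> real ((2 * q + m) choose q) * (real q + real m) ^ d" .
  then show ?thesis
    using qm by (simp add: B_def d_def)
qed

lemma binomial_product_identity:
  "real ((s + a) choose s) * real ((s + a + m) choose s) * real ((2 * (s + a) + m) choose (s + a))
     = real ((2 * (s + a) + m) choose (2 * s)) * real ((2 * s) choose s) * real ((2 * a + m) choose a)"
proof -
  define M where "M = 2 * (s + a) + m"
  have f1: "real ((s + a) choose s) = fact (s + a) / (fact s * fact a)"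
    by (subst binomial_fact) auto
  have f2: "real ((s + a + m) choose s) = fact (s + a + m) / (fact s * fact (a + m))"
    by (subst binomial_fact) (auto simp: add.assoc)
  have f3: "real (M choose (s + a)) = fact M / (fact (s + a) * fact (s + a + m))"
    by (subst binomial_fact) (auto simp: M_def algebra_simps)
  have f4: "real (M choose (2 * s)) = fact M / (fact (2 * s) * fact (2 * a + m))"
    by (subst binomial_fact) (auto simp: M_def)
  have f5: "real ((2 * s) choose s) = fact (2 * s) / (fact s * fact s)"
    by (subst binomial_fact) (auto simp: mult_2)
  have f6: "real ((2 * a + m) choose a) = fact (2 * a + m) / (fact a * fact (a + m))"
    by (subst binomial_fact) auto
  show ?thesis
    unfolding M_def[symmetric] f1 f2 f3 f4 f5 f6 by (simp add: field_simps)
qed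

lemma binomial_weight_lower:
  assumes n: "n = 2 * p + m" and "4 \<le> n" and "16 * m \<le> n" and "4 * s \<le> n + 2"
  shows "exp (- 16 * (real m)\<^sup>2 / real n) / (6 * sqrt (real n)) * real (n choose (2 * s))
           \<le> real (p choose s) * real ((p + m) choose s)"
proof -
  define q where "q = p - s"
  define N where "N = 2 * q + m"
  define E where "E = exp (- 16 * (real m)\<^sup>2 / real n)"
  have "s \<le> p" and mq: "m \<le> q"
    using assms by (simp_all add: q_def)
  then have p: "p = s + q" and Nn: "n = 2 * s + N" and n8: "real n \<le> 8 * (real q + real m)"
    using assms by (simp_all add: q_def N_def)
  have "2 * (real m)\<^sup>2 / (real q + real m) = 16 * (real m)\<^sup>2 / (8 * (real q + real m))"
    by (cases "real q + real m = 0") (simp_all add: field_simps)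
  also have "\<dots> \<le> 16 * (real m)\<^sup>2 / real n"
    using n8 assms(2) by (intro frac_le) auto
  finally have "2 * (real m)\<^sup>2 / (real q + real m) \<le> 16 * (real m)\<^sup>2 / real n" .
  then have "E \<le> exp (- 2 * (real m)\<^sup>2 / (real q + real m))"
    by (simp add: E_def)
  moreover have "N div 2 = q + m div 2"
    by (simp add: N_def)
  ultimately have "E * real (N choose (N div 2))
      \<le> exp (- 2 * (real m)\<^sup>2 / (real q + real m)) * real (N choose (q + m div 2))"
    by (simp add: mult_right_mono)
  also have "\<dots> \<le> real (N choose q)"
    unfolding N_def by (rule binomial_off_centre_lower[OF mq])
  finally have centre: "E * real (N choose (N div 2)) \<le> real (N choose q)" .
  have identity: "real (p choose s) * real ((p + m) choose s) * real (n choose p)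
      = real (n choose (2 * s)) * real ((2 * s) choose s) * real (N choose q)"
    using binomial_product_identity[of s q m] by (simp add: n p N_def add.assoc)
  have npos: "0 < sqrt (real n)"
    using assms(2) by simp
  have "E / (6 * sqrt (real n)) * real (n choose (2 * s)) * real (n choose p)
      \<le> E / (6 * sqrt (real n)) * real (n choose (2 * s))
          * (6 * sqrt (real n) * (real ((2 * s) choose s) * real (N choose (N div 2))))"
    using binomial_le_central_product[OF Nn, of p] assms(2) by (intro mult_left_mono) (auto simp: E_def)
  also have "\<dots> = real (n choose (2 * s)) * real ((2 * s) choose s) * (E * real (N choose (N div 2)))"
    using npos by (simp add: field_simps)
  also have "\<dots> \<le> real (n choose (2 * s)) * real ((2 * s) choose s) * real (N choose q)"
    using centre by (intro mult_left_mono) auto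
  finally have "E / (6 * sqrt (real n)) * real (n choose (2 * s)) * real (n choose p)
      \<le> real (p choose s) * real ((p + m) choose s) * real (n choose p)"
    unfolding identity .
  then show ?thesis
    unfolding E_def by (rule mult_right_le_imp_le) (simp add: n)
qed

section \<open>Prefix sums of the weights\<close>

lemma sum_even_binomial_le: "(\<Sum>s\<le>S. real (n choose (2 * s))) \<le> 2 ^ n"
proof -
  have "(\<Sum>s\<le>S. real (n choose (2 * s))) = (\<Sum>j\<in>(\<lambda>s. 2 * s) ` {..S}. real (n choose j))"
    by (subst sum.reindex) (auto simp: inj_on_def)
  also have "\<dots> \<le> (\<Sum>j\<le>max (2 * S) n. real (n choose j))"
    by (intro sum_mono2) auto
  also have "\<dots> = (\<Sum>j\<le>n. real (n choose j))"
    by (rule sum.mono_neutral_right) (auto simp: binomial_eq_0)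
  also have "\<dots> = 2 ^ n"
    by (metis choose_row_sum of_nat_numeral of_nat_power of_nat_sum)
  finally show ?thesis .
qed

lemma binomial_sum_lower_half: "2 ^ n \<le> 2 * (\<Sum>j\<le>n div 2. real (n choose j))"
proof -
  define h where "h = n div 2"
  have "2 ^ n = (\<Sum>j\<le>n. real (n choose j))"
    using choose_row_sum[of n] by (metis of_nat_numeral of_nat_power of_nat_sum)
  also have "{..n} = {..h} \<union> {h<..n}" by (auto simp: h_def)
  also have "(\<Sum>j\<in>{..h} \<union> {h<..n}. real (n choose j))
      = (\<Sum>j\<le>h. real (n choose j)) + (\<Sum>j\<in>{h<..n}. real (n choose j))"
    by (rule sum.union_disjoint) auto
  also have "(\<Sum>j\<in>{h<..n}. real (n choose j)) = (\<Sum>j\<in>{h<..n}. real (n choose (n - j)))"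
    by (intro sum.cong refl) (simp add: binomial_symmetric[symmetric])
  also have "\<dots> = (\<Sum>i\<in>(\<lambda>j. n - j) ` {h<..n}. real (n choose i))"
    by (subst sum.reindex) (auto simp: inj_on_def)
  also have "\<dots> \<le> (\<Sum>i\<le>h. real (n choose i))"
    by (intro sum_mono2) (auto simp: h_def)
  finally show ?thesis by (simp add: h_def)
qed

lemma binomial_le_twice_Suc:
  assumes "0 < n" and "j \<le> n div 2"
  shows "real (n choose j) \<le> 2 * real (n choose Suc j)"
proof -
  have step: "Suc j * (n choose Suc j) = (n - j) * (n choose j)"
    by (metis binomial_absorption binomial_absorb_comp)
  have "Suc j * (n choose j) \<le> 2 * (n - j) * (n choose j)"
    using assms by (intro mult_right_mono) linarith+
  also have "\<dots> = Suc j * (2 * (n choose Suc j))"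
    using step by (simp add: mult_ac)
  finally have "n choose j \<le> 2 * (n choose Suc j)"
    by (rule mult_left_le_imp_le) simp
  then show ?thesis
    by (metis of_nat_le_iff of_nat_mult of_nat_numeral)
qed

lemma sum_atMost_double:
  fixes g :: "nat \<Rightarrow> 'a::comm_monoid_add"
  shows "(\<Sum>j\<le>2 * S. g j) = g 0 + (\<Sum>s<S. g (2 * s + 1) + g (2 * s + 2))"
  by (induction S) (simp_all add: add_ac)

lemma sum_even_binomial_quarter_ge:
  assumes "0 < n"
  shows "2 ^ n \<le> 6 * (\<Sum>s\<le>(n div 2 + 1) div 2. real (n choose (2 * s)))"
proof -
  define S where "S = (n div 2 + 1) div 2"
  define c where "c j = real (n choose j)" for j
  have "(\<Sum>j\<le>n div 2. c j) \<le> (\<Sum>j\<le>2 * S. c j)"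
    by (intro sum_mono2) (auto simp: S_def c_def)
  also have "\<dots> = c 0 + (\<Sum>s<S. c (2 * s + 1) + c (2 * s + 2))"
    by (rule sum_atMost_double)
  also have "\<dots> \<le> c 0 + (\<Sum>s<S. 3 * c (2 * Suc s))"
  proof (intro add_left_mono sum_mono)
    fix s assume "s \<in> {..<S}"
    then have "2 * s + 1 \<le> n div 2"
      by (simp add: S_def)
    then have "c (2 * s + 1) \<le> 2 * c (2 * s + 2)"
      using binomial_le_twice_Suc[OF assms] by (simp add: c_def)
    then show "c (2 * s + 1) + c (2 * s + 2) \<le> 3 * c (2 * Suc s)"
      by simp
  qed
  also have "\<dots> \<le> 3 * (c 0 + (\<Sum>s<S. c (2 * Suc s)))"
    by (simp add: sum_distrib_left c_def)
  also have "c 0 + (\<Sum>s<S. c (2 * Suc s)) = (\<Sum>s\<le>S. c (2 * s))"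
    unfolding lessThan_Suc_atMost[symmetric] sum.lessThan_Suc_shift by simp
  finally show ?thesis
    using binomial_sum_lower_half[of n] by (simp add: S_def c_def)
qed

lemma sum_binomial_weights_ge_large:
  assumes n: "n = 2 * p + m" and "4 \<le> n" and "16 * m \<le> n"
  shows "exp (- 16 * (real m)\<^sup>2 / real n) / (36 * sqrt (real n)) * (\<Sum>s\<le>S. real (n choose (2 * s)))
           \<le> (\<Sum>s\<le>S. real (p choose s) * real ((p + m) choose s))"
proof -
  define S1 where "S1 = (n div 2 + 1) div 2"
  define l where "l = exp (- 16 * (real m)\<^sup>2 / real n) / (6 * sqrt (real n))"
  define c where "c s = real (n choose (2 * s))" for s
  have l0: "0 \<le> l"
    by (simp add: l_def)
  have "l / 6 * (\<Sum>s\<le>S. c s) \<le> l * (\<Sum>s\<le>min S S1. c s)"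
  proof (cases "S \<le> S1")
    case True
    have "l / 6 * (\<Sum>s\<le>S. c s) \<le> l * (\<Sum>s\<le>S. c s)"
      using l0 by (intro mult_right_mono) (auto simp: c_def sum_nonneg)
    then show ?thesis
      using True by (simp add: min_absorb1)
  next
    case False
    have "l / 6 * (\<Sum>s\<le>S. c s) \<le> l * (2 ^ n / 6)"
      using l0 sum_even_binomial_le[where S = S and n = n] by (simp add: c_def divide_right_mono mult_left_mono)
    also have "\<dots> \<le> l * (\<Sum>s\<le>S1. c s)"
      using sum_even_binomial_quarter_ge[of n] assms(2) l0 by (intro mult_left_mono) (auto simp: S1_def c_def)
    finally show ?thesis
      using False by simp
  qed
  also have "\<dots> \<le> (\<Sum>s\<le>min S S1. real (p choose s) * real ((p + m) choose s))"
    unfolding sum_distrib_left c_def l_def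
    by (intro sum_mono binomial_weight_lower[OF assms]) (auto simp: S1_def)
  also have "\<dots> \<le> (\<Sum>s\<le>S. real (p choose s) * real ((p + m) choose s))"
    by (intro sum_mono2) auto
  finally show ?thesis
    by (simp add: l_def c_def)
qed

lemma sum_binomial_weights_ge_small:
  assumes "0 \<le> c" and "c \<le> 1 / 2 ^ n"
  shows "c * (\<Sum>s\<le>S. real (n choose (2 * s))) \<le> (\<Sum>s\<le>S. real (p choose s) * real ((p + m) choose s))"
proof -
  have "c * (\<Sum>s\<le>S. real (n choose (2 * s))) \<le> 1 / 2 ^ n * 2 ^ n"
    using assms sum_even_binomial_le[where S = S and n = n] by (intro mult_mono) (auto intro: sum_nonneg)
  also have "\<dots> = real (p choose 0) * real ((p + m) choose 0)"
    by simp
  also have "\<dots> \<le> (\<Sum>s\<le>S. real (p choose s) * real ((p + m) choose s))"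
    by (rule member_le_sum) auto
  finally show ?thesis .
qed

lemma offset_le_const_sqrt_bounds:
  fixes C :: real
  assumes "0 < C" and "256 * C\<^sup>2 \<le> real n" and "real m \<le> C * sqrt (real n)"
  shows "16 * m \<le> n" and "exp (- 16 * C\<^sup>2) \<le> exp (- 16 * (real m)\<^sup>2 / real n)"
proof -
  have "16 * C \<le> sqrt (real n)"
    using assms(1,2) real_le_rsqrt[of "16 * C" "real n"] by (simp add: power2_eq_square)
  have "16 * real m \<le> 16 * C * sqrt (real n)"
    using assms(3) by simp
  also have "\<dots> \<le> sqrt (real n) * sqrt (real n)"
    using \<open>16 * C \<le> sqrt (real n)\<close> by (rule mult_right_mono) simp
  finally show "16 * m \<le> n"
    by simp
  have "(real m)\<^sup>2 \<le> (C * sqrt (real n))\<^sup>2"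
    using assms(3) by (intro power_mono) auto
  then have "16 * (real m)\<^sup>2 / real n \<le> 16 * C\<^sup>2"
    using assms(1,2) by (cases "n = 0") (auto simp: divide_le_eq power_mult_distrib mult_ac)
  then show "exp (- 16 * C\<^sup>2) \<le> exp (- 16 * (real m)\<^sup>2 / real n)"
    by simp
qed

lemma sum_binomial_weights_ge:
  fixes C :: real
  assumes "0 < C"
  obtains \<kappa> where "0 < \<kappa>"
    and "\<And>n p m S. n = 2 * p + m \<Longrightarrow> 1 \<le> n \<Longrightarrow> real m \<le> C * sqrt (real n) \<Longrightarrow>
           \<kappa> / sqrt (real n) * (\<Sum>s\<le>S. real (n choose (2 * s)))
             \<le> (\<Sum>s\<le>S. real (p choose s) * real ((p + m) choose s))"
proof -
  define N0 where "N0 = nat \<lceil>max 4 (256 * C\<^sup>2)\<rceil>"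
  define \<kappa> where "\<kappa> = min (exp (- 16 * C\<^sup>2) / 36) (1 / 2 ^ N0)"
  have "0 < \<kappa>"
    by (simp add: \<kappa>_def)
  moreover have "\<kappa> / sqrt (real n) * (\<Sum>s\<le>S. real (n choose (2 * s)))
      \<le> (\<Sum>s\<le>S. real (p choose s) * real ((p + m) choose s))"
    if n: "n = 2 * p + m" and "1 \<le> n" and m: "real m \<le> C * sqrt (real n)" for n p m S
  proof (cases "n < N0")
    case True
    have "\<kappa> / sqrt (real n) \<le> \<kappa>"
      using \<open>0 < \<kappa>\<close> \<open>1 \<le> n\<close> by (simp add: divide_le_eq mult_le_cancel_left1)
    also have "\<dots> \<le> 1 / 2 ^ N0"
      by (simp add: \<kappa>_def)
    also have "\<dots> \<le> 1 / 2 ^ n"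
      using True by (simp add: frac_le power_increasing)
    finally show ?thesis
      using \<open>0 < \<kappa>\<close> by (intro sum_binomial_weights_ge_small) auto
  next
    case False
    then have large: "max 4 (256 * C\<^sup>2) \<le> real n"
      using real_nat_ceiling_ge[of "max 4 (256 * C\<^sup>2)"] unfolding N0_def by linarith
    then have "16 * m \<le> n" and "exp (- 16 * C\<^sup>2) \<le> exp (- 16 * (real m)\<^sup>2 / real n)"
      using offset_le_const_sqrt_bounds[OF assms _ m] by auto
    then have "\<kappa> \<le> exp (- 16 * (real m)\<^sup>2 / real n) / 36"
      unfolding \<kappa>_def by linarith
    then have "\<kappa> / sqrt (real n) \<le> exp (- 16 * (real m)\<^sup>2 / real n) / 36 / sqrt (real n)"
      by (rule divide_right_mono) simp
    then have "\<kappa> / sqrt (real n) * (\<Sum>s\<le>S. real (n choose (2 * s)))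
        \<le> exp (- 16 * (real m)\<^sup>2 / real n) / (36 * sqrt (real n)) * (\<Sum>s\<le>S. real (n choose (2 * s)))"
      by (intro mult_right_mono) (auto intro: sum_nonneg)
    also have "\<dots> \<le> (\<Sum>s\<le>S. real (p choose s) * real ((p + m) choose s))"
      using large by (intro sum_binomial_weights_ge_large[OF n _ \<open>16 * m \<le> n\<close>]) simp
    finally show ?thesis .
  qed
  ultimately show thesis
    by (rule that)
qed

theorem mainTheorem4:
  fixes C :: real
  assumes "C > 0"
  shows "\<exists>c>0. \<forall>(n::nat) (m::int) (k::nat).
           n \<ge> 1 \<longrightarrow> \<bar>m\<bar> \<le> int n \<longrightarrow> even (int n - \<bar>m\<bar>) \<longrightarrow>
           real_of_int \<bar>m\<bar> \<le> C * sqrt (real n) \<longrightarrow> k \<ge> 1 \<longrightarrow>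
           (SUP r\<in>{0..1::real}. \<bar>(deriv ^^ k) (zernikeR n (nat \<bar>m\<bar>)) r\<bar>)
             \<ge> c / sqrt (real n) *
               ((\<Prod>j<k. (real n)\<^sup>2 - (real j)\<^sup>2) / (2 ^ k * pochhammer (1/2) k))"
proof -
  obtain \<kappa> where "0 < \<kappa>"
    and weights: "\<And>n p m S. n = 2 * p + m \<Longrightarrow> 1 \<le> n \<Longrightarrow> real m \<le> C * sqrt (real n) \<Longrightarrow>
      \<kappa> / sqrt (real n) * (\<Sum>s\<le>S. real (n choose (2 * s)))
        \<le> (\<Sum>s\<le>S. real (p choose s) * real ((p + m) choose s))"
    using sum_binomial_weights_ge[OF assms] by blast
  show ?thesis
  proof (intro exI[of _ \<kappa>] conjI allI impI)
    fix n k :: nat and m :: int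
    assume "n \<ge> 1" and m_le: "\<bar>m\<bar> \<le> int n" and "even (int n - \<bar>m\<bar>)"
      and m_sqrt: "real_of_int \<bar>m\<bar> \<le> C * sqrt (real n)"
    define p where "p = (n - nat \<bar>m\<bar>) div 2"
    have "even (n - nat \<bar>m\<bar>)"
      using \<open>even (int n - \<bar>m\<bar>)\<close> m_le by (metis even_of_nat int_nat_eq abs_ge_zero of_nat_diff nat_le_iff)
    then have n: "n = 2 * p + nat \<bar>m\<bar>"
      using m_le unfolding p_def by simp
    show "\<kappa> / sqrt (real n) * ((\<Prod>j<k. (real n)\<^sup>2 - (real j)\<^sup>2) / (2 ^ k * pochhammer (1/2) k))
        \<le> (SUP r\<in>{0..1::real}. \<bar>(deriv ^^ k) (zernikeR n (nat \<bar>m\<bar>)) r\<bar>)"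
      using weights[OF n] \<open>n \<ge> 1\<close> m_sqrt by (intro zernikeR_higher_deriv_SUP_ge[OF n]) simp
  qed (rule \<open>0 < \<kappa>\<close>)
qed

end
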